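(* Let $\rho_1$ be a path in a higraph and $k\ge1$. Given a $k$-tuple $(e^1_1,\dots,e^k_1)$ of distinct breaks of $\rho_1$, define recursively for $j=2,\dots,k$: $\rho_j=q(\rho_{j-1},e^{j-1}_{j-1})$ and $e^i_j=\pi(e^i_{j-1})$ for $j\le i\le k$, where $\pi$ is the bijection induced by the gluing $\rho_{j-1}\mapsto\rho_j$. Then the map $(e^1_1,e^2_1,\dots,e^k_1)\mapsto(e^1_1,e^2_2,\dots,e^k_k)$ is a bijection from the set of $k$-tuples of distinct breaks of $\rho_1$ to the set of $k$-step gluing sequences on $\rho_1$. Furthermore, if two $k$-tuples differ by a permutation, then the corresponding $k$-step gluing sequences terminate in the same path $\rho_{k+1}$.
   Context: A directed hypergraph $\mathcal H=(\mathcal V,\mathcal E)$ has edges $\varepsilon=(I,J)\in2^{\mathcal V}\times2^{\mathcal V}$, source $I$, target $J$. It is a higraph if for all edges $\varepsilon,\varepsilon'$: (Transitive) if $t(\varepsilon)\cap s(\varepsilon')\ne\emptyset$ then it equals $\{K\}$ for one vertex $K$, the unions $s(\varepsilon)\cup(s(\varepsilon')\setminus\{K\})$ and $(t(\varepsilon)\setminus\{K\})\cup t(\varepsilon')$ are disjoint unions and their pair is an edge; (Acyclic) if $t(\varepsilon)\cap s(\varepsilon')$ and $t(\varepsilon')\cap s(\varepsilon)$ are both non-empty then $\varepsilon=\varepsilon'=(\{K\},\{K\})$. A path is a non-empty finite directed tree $T=(V,E)$ (nodes; arrows, called breaks) with $\rho:V\to\mathcal E$ such that for each arrow $e$, $t(\rho(s(e)))\cap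 s(\rho(t(e)))$ is a single vertex $\rho(e)$, and distinct arrows with common source node or common target node have distinct $\rho(e)$; label-compatible tree isomorphisms identify paths. For a subpath $\rho'$, $s(\rho')=\bigcup_v(s(\rho'(v))\setminus\{\rho'(e):t(e)=v\})$, $t(\rho')=\bigcup_v(t(\rho'(v))\setminus\{\rho'(e):s(e)=v\})$. Gluing at a break $e$: $q(\rho,e)$ has tree obtained by contracting the arrow $e$ to a node $v^*$ (other arrows kept), labels unchanged away from $v^*$, $\rho(v^* )=(s(\rho'),t(\rho'))$ with $\rho'$ the subpath on the endpoints of $e$. This contraction induces a bijection $\pi$ from the arrows of the old tree other than $e$ to the arrows of the new tree. A $k$-step gluing sequence on $\rho_1$ is $(e_1,\dots,e_k)$ with $e_i$ a break of $\rho_i$ and $\rho_{i+1}=q(\rho_i,e_i)$, identified up to isomorphisms of the corresponding paths identifying corresponding breaks. *)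

theory Defs
  imports Main "HOL-Combinatorics.Permutations"
begin

type_synonym 'v hedge = "'v set \<times> 'v set"

definition higraph :: "'v set \<Rightarrow> 'v hedge set \<Rightarrow> bool" where
  "higraph V E \<longleftrightarrow> E \<subseteq> Pow V \<times> Pow V \<and>
     (\<forall>\<epsilon>\<in>E. \<forall>\<epsilon>'\<in>E.
        (snd \<epsilon> \<inter> fst \<epsilon>' \<noteq> {} \<longrightarrow>
           (\<exists>K. snd \<epsilon> \<inter> fst \<epsilon>' = {K}
              \<and> fst \<epsilon> \<inter> (fst \<epsilon>' - {K}) = {}
              \<and> (snd \<epsilon> - {K}) \<inter> snd \<epsilon>' = {}
              \<and> (fst \<epsilon> \<union> (fst \<epsilon>' - {K}), (snd \<epsilon> - {K}) \<union> snd \<epsilon>') \<in> E))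
      \<and> (snd \<epsilon> \<inter> fst \<epsilon>' \<noteq> {} \<and> snd \<epsilon>' \<inter> fst \<epsilon> \<noteq> {} \<longrightarrow>
           (\<exists>K. \<epsilon> = ({K},{K}) \<and> \<epsilon>' = ({K},{K}))))"

text \<open>A labelled directed tree: nodes, arrows (breaks), source/target of arrows,
  node labels (hyperedges) and arrow labels (vertices).\<close>
record ('v,'n,'a) hpath =
  Nodes :: "'n set"
  Arrows :: "'a set"
  asrc :: "'a \<Rightarrow> 'n"
  atgt :: "'a \<Rightarrow> 'n"
  nlab :: "'n \<Rightarrow> 'v hedge"
  alab :: "'a \<Rightarrow> 'v"

definition undir_rel :: "('v,'n,'a) hpath \<Rightarrow> ('n \<times> 'n) set" where
  "undir_rel T = {(asrc T a, atgt T a) | a. a \<in> Arrows T} \<union> {(atgt T a, asrc T a) | a. a \<in> Arrows T}"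

definition is_dtree :: "('v,'n,'a) hpath \<Rightarrow> bool" where
  "is_dtree T \<longleftrightarrow> finite (Nodes T) \<and> Nodes T \<noteq> {} \<and> finite (Arrows T)
     \<and> (\<forall>a\<in>Arrows T. asrc T a \<in> Nodes T \<and> atgt T a \<in> Nodes T)
     \<and> card (Arrows T) + 1 = card (Nodes T)
     \<and> (\<forall>x\<in>Nodes T. \<forall>y\<in>Nodes T. (x, y) \<in> (undir_rel T)\<^sup>*)"

definition is_path :: "'v hedge set \<Rightarrow> ('v,'n,'a) hpath \<Rightarrow> bool" where
  "is_path E T \<longleftrightarrow> is_dtree T
     \<and> (\<forall>v\<in>Nodes T. nlab T v \<in> E)
     \<and> (\<forall>a\<in>Arrows T. snd (nlab T (asrc T a)) \<inter> fst (nlab T (atgt T a)) = {alab T a})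
     \<and> (\<forall>a\<in>Arrows T. \<forall>b\<in>Arrows T. a \<noteq> b \<and> asrc T a = asrc T b \<longrightarrow> alab T a \<noteq> alab T b)
     \<and> (\<forall>a\<in>Arrows T. \<forall>b\<in>Arrows T. a \<noteq> b \<and> atgt T a = atgt T b \<longrightarrow> alab T a \<noteq> alab T b)"

definition sub_arrows :: "('v,'n,'a) hpath \<Rightarrow> 'n set \<Rightarrow> 'a set" where
  "sub_arrows T S = {a \<in> Arrows T. asrc T a \<in> S \<and> atgt T a \<in> S}"

definition sub_src :: "('v,'n,'a) hpath \<Rightarrow> 'n set \<Rightarrow> 'v set" where
  "sub_src T S = (\<Union>v\<in>S. fst (nlab T v) - {alab T a | a. a \<in> sub_arrows T S \<and> atgt T a = v})"

definition sub_tgt :: "('v,'n,'a) hpath \<Rightarrow> 'n set \<Rightarrow> 'v set" where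
  "sub_tgt T S = (\<Union>v\<in>S. snd (nlab T v) - {alab T a | a. a \<in> sub_arrows T S \<and> asrc T a = v})"

text \<open>Gluing at break e: the arrow e is contracted; the contracted node v* is
  represented by the node asrc e (the node atgt e is removed, arrows incident to it
  are redirected to asrc e).\<close>
definition glue :: "('v,'n,'a) hpath \<Rightarrow> 'a \<Rightarrow> ('v,'n,'a) hpath" where
  "glue T e = (let u = asrc T e; w = atgt T e; S = {u, w} in
     \<lparr> Nodes = Nodes T - {w},
       Arrows = Arrows T - {e},
       asrc = (\<lambda>a. if asrc T a = w then u else asrc T a),
       atgt = (\<lambda>a. if atgt T a = w then u else atgt T a),
       nlab = (nlab T)(u := (sub_src T S, sub_tgt T S)),
       alab = alab T \<rparr>)"

text \<open>The bijection pi from arrows of T other than e to arrows of glue T e induced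
  by the contraction (in this representation arrows keep their identity).\<close>
definition glue_pi :: "('v,'n,'a) hpath \<Rightarrow> 'a \<Rightarrow> 'a \<Rightarrow> 'a" where
  "glue_pi T e a = a"

definition path_iso :: "('v,'n,'a) hpath \<Rightarrow> ('v,'m,'b) hpath \<Rightarrow> ('n \<Rightarrow> 'm) \<Rightarrow> ('a \<Rightarrow> 'b) \<Rightarrow> bool" where
  "path_iso T T' \<phi> \<psi> \<longleftrightarrow> bij_betw \<phi> (Nodes T) (Nodes T') \<and> bij_betw \<psi> (Arrows T) (Arrows T')
     \<and> (\<forall>a\<in>Arrows T. asrc T' (\<psi> a) = \<phi> (asrc T a) \<and> atgt T' (\<psi> a) = \<phi> (atgt T a)
                      \<and> alab T' (\<psi> a) = alab T a)
     \<and> (\<forall>v\<in>Nodes T. nlab T' (\<phi> v) = nlab T v)"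

definition isomorphic :: "('v,'n,'a) hpath \<Rightarrow> ('v,'m,'b) hpath \<Rightarrow> bool" where
  "isomorphic T T' \<longleftrightarrow> (\<exists>\<phi> \<psi>. path_iso T T' \<phi> \<psi>)"

fun is_gseq :: "('v,'n,'a) hpath \<Rightarrow> 'a list \<Rightarrow> bool" where
  "is_gseq T [] = True"
| "is_gseq T (e # es) = (e \<in> Arrows T \<and> is_gseq (glue T e) es)"

fun glue_all :: "('v,'n,'a) hpath \<Rightarrow> 'a list \<Rightarrow> ('v,'n,'a) hpath" where
  "glue_all T [] = T"
| "glue_all T (e # es) = glue_all (glue T e) es"

fun gseq_iso :: "('v,'n,'a) hpath \<Rightarrow> 'a list \<Rightarrow> ('v,'n,'a) hpath \<Rightarrow> 'a list \<Rightarrow> bool" where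
  "gseq_iso T [] T' [] = isomorphic T T'"
| "gseq_iso T (e # es) T' (e' # es') =
     ((\<exists>\<phi> \<psi>. path_iso T T' \<phi> \<psi> \<and> \<psi> e = e') \<and> gseq_iso (glue T e) es (glue T' e') es')"
| "gseq_iso T _ T' _ = False"

definition gseq_rel :: "('v,'n,'a) hpath \<Rightarrow> ('a list \<times> 'a list) set" where
  "gseq_rel T = {(es, es'). gseq_iso T es T es'}"

definition gluing_sequences :: "('v,'n,'a) hpath \<Rightarrow> nat \<Rightarrow> 'a list set set" where
  "gluing_sequences T k = {es. is_gseq T es \<and> length es = k} // gseq_rel T"

definition break_tuples :: "('v,'n,'a) hpath \<Rightarrow> nat \<Rightarrow> 'a list set" where
  "break_tuples T k = {es. set es \<subseteq> Arrows T \<and> distinct es \<and> length es = k}"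

fun tuple_to_gseq :: "('v,'n,'a) hpath \<Rightarrow> 'a list \<Rightarrow> 'a list" where
  "tuple_to_gseq T [] = []"
| "tuple_to_gseq T (e # es) = e # tuple_to_gseq (glue T e) (map (glue_pi T e) es)"

end

theory Submission
  imports Defs
begin

text \<open>Gluing keeps the identity of the remaining breaks, so the map on tuples is the identity on
  lists of distinct breaks, and these lists are exactly the gluing sequences. The bijection thus
  amounts to rigidity of paths: every automorphism of a path fixes all breaks. An automorphism
  fixing one node fixes every node, because breaks at a common node carry distinct labels and the
  tree is connected. A fixed node exists: if all breaks carry one label, the unique node that is no
  target is fixed; otherwise gluing away one label class gives a smaller path with an induced
  automorphism acting on the remaining breaks as before, and induction applies.

  Permutation invariance reduces to adjacent transpositions: gluing two breaks in either order
  gives isomorphic paths, since in each of the ways two breaks can meet the disjointness conditions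
  of the transitivity axiom make the two merged labels coincide.\<close>

section \<open>Trees\<close>

lemma glue_simps [simp]:
  "Nodes (glue T e) = Nodes T - {atgt T e}"
  "Arrows (glue T e) = Arrows T - {e}"
  "asrc (glue T e) a = (if asrc T a = atgt T e then asrc T e else asrc T a)"
  "atgt (glue T e) a = (if atgt T a = atgt T e then asrc T e else atgt T a)"
  "alab (glue T e) = alab T"
  by (simp_all add: glue_def Let_def)

lemma in_undir_rel_iff:
  "(x, y) \<in> undir_rel T \<longleftrightarrow>
     (\<exists>a\<in>Arrows T. x = asrc T a \<and> y = atgt T a \<or> x = atgt T a \<and> y = asrc T a)"
  unfolding undir_rel_def by blast

lemma sym_rtrancl_undir_rel: "sym ((undir_rel T)\<^sup>*)"
  by (rule sym_rtrancl) (auto simp: sym_def in_undir_rel_iff)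

definition connected_nodes :: "('v,'n,'a) hpath \<Rightarrow> bool" where
  "connected_nodes T \<longleftrightarrow> (\<forall>x\<in>Nodes T. \<forall>y\<in>Nodes T. (x, y) \<in> (undir_rel T)\<^sup>*)"

abbreviation delete_arrow :: "('v,'n,'a) hpath \<Rightarrow> 'a \<Rightarrow> ('v,'n,'a) hpath" where
  "delete_arrow T b \<equiv> T\<lparr>Arrows := Arrows T - {b}\<rparr>"

lemma is_dtreeD:
  assumes "is_dtree T"
  shows "finite (Nodes T)" "finite (Arrows T)"
    "\<And>a. a \<in> Arrows T \<Longrightarrow> asrc T a \<in> Nodes T"
    "\<And>a. a \<in> Arrows T \<Longrightarrow> atgt T a \<in> Nodes T"
    "card (Arrows T) + 1 = card (Nodes T)" "connected_nodes T"
  using assms by (simp_all add: is_dtree_def connected_nodes_def)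

lemma rtrancl_map:
  assumes "(x, y) \<in> R\<^sup>*" and "\<And>x y. (x, y) \<in> R \<Longrightarrow> (f x, f y) \<in> S\<^sup>*"
  shows "(f x, f y) \<in> S\<^sup>*"
  using assms(1)
proof induction
  case (step y z)
  then show ?case using assms(2) rtrancl_trans by metis
qed simp

lemma connected_glue:
  assumes "connected_nodes T" and "e \<in> Arrows T"
  shows "connected_nodes (glue T e)"
  unfolding connected_nodes_def
proof (intro ballI)
  define r where "r x = (if x = atgt T e then asrc T e else x)" for x
  have step: "(r x, r y) \<in> (undir_rel (glue T e))\<^sup>*" if xy: "(x, y) \<in> undir_rel T" for x y
  proof -
    obtain a where a: "a \<in> Arrows T" "x = asrc T a \<and> y = atgt T a \<or> x = atgt T a \<and> y = asrc T a"
      using xy unfolding in_undir_rel_iff by blast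
    show ?thesis
    proof (cases "a = e")
      case True
      then show ?thesis using a(2) by (auto simp: r_def)
    next
      case False
      then have "(r x, r y) \<in> undir_rel (glue T e)"
        using a unfolding in_undir_rel_iff by (auto simp: r_def)
      then show ?thesis by blast
    qed
  qed
  fix x y assume "x \<in> Nodes (glue T e)" "y \<in> Nodes (glue T e)"
  then have "x \<in> Nodes T" "y \<in> Nodes T" and fixed: "r x = x" "r y = y" by (auto simp: r_def)
  then have "(x, y) \<in> (undir_rel T)\<^sup>*" using assms(1) unfolding connected_nodes_def by blast
  then have "(r x, r y) \<in> (undir_rel (glue T e))\<^sup>*" using step by (rule rtrancl_map)
  then show "(x, y) \<in> (undir_rel (glue T e))\<^sup>*" using fixed by simp
qed

lemma connected_delete_arrow:
  assumes "connected_nodes T" and "(asrc T b, atgt T b) \<in> (undir_rel (delete_arrow T b))\<^sup>*"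
  shows "connected_nodes (delete_arrow T b)"
proof -
  have "undir_rel T \<subseteq> (undir_rel (delete_arrow T b))\<^sup>*"
  proof (clarify)
    fix x y assume "(x, y) \<in> undir_rel T"
    then obtain c where c: "c \<in> Arrows T" "x = asrc T c \<and> y = atgt T c \<or> x = atgt T c \<and> y = asrc T c"
      unfolding in_undir_rel_iff by blast
    show "(x, y) \<in> (undir_rel (delete_arrow T b))\<^sup>*"
    proof (cases "c = b")
      case True
      have "(atgt T b, asrc T b) \<in> (undir_rel (delete_arrow T b))\<^sup>*"
        using assms(2) by (rule symD[OF sym_rtrancl_undir_rel])
      then show ?thesis using c(2) assms(2) True by auto
    next
      case False
      then have "(x, y) \<in> undir_rel (delete_arrow T b)"
        using c unfolding in_undir_rel_iff by auto
      then show ?thesis by blast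
    qed
  qed
  then have "(undir_rel T)\<^sup>* \<subseteq> (undir_rel (delete_arrow T b))\<^sup>*"
    by (rule rtrancl_subset_rtrancl)
  then show ?thesis using assms(1) unfolding connected_nodes_def by auto
qed

lemma connected_card_Nodes_le:
  assumes "finite (Arrows T)" and "finite (Nodes T)"
    and "\<forall>a\<in>Arrows T. asrc T a \<in> Nodes T \<and> atgt T a \<in> Nodes T" and "connected_nodes T"
  shows "card (Nodes T) \<le> card (Arrows T) + 1"
  using assms
proof (induction "card (Arrows T)" arbitrary: T)
  case 0
  then have "undir_rel T = {}" by (simp add: undir_rel_def)
  then have "\<forall>x\<in>Nodes T. \<forall>y\<in>Nodes T. x = y" using "0.prems"(4) by (simp add: connected_nodes_def)
  then show ?case using card_le_Suc0_iff_eq[OF "0.prems"(2)] by simp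
next
  case (Suc n)
  then obtain a where a: "a \<in> Arrows T" by (metis card.empty ex_in_conv nat.distinct(1))
  show ?case
  proof (cases "asrc T a = atgt T a")
    case True
    then have "connected_nodes (delete_arrow T a)"
      using connected_delete_arrow[OF Suc.prems(4)] by simp
    moreover have "card (Arrows (delete_arrow T a)) = n"
      using Suc.hyps(2) a by (simp add: card_Diff_singleton)
    ultimately have "card (Nodes T) \<le> n + 1"
      using Suc.hyps(1)[of "delete_arrow T a"] Suc.prems(1-3) by simp
    then show ?thesis using Suc.hyps(2) by linarith
  next
    case False
    have "card (Nodes (glue T a)) \<le> card (Arrows (glue T a)) + 1"
    proof (rule Suc.hyps(1))
      show "n = card (Arrows (glue T a))" using Suc.hyps(2) a by (simp add: card_Diff_singleton)
      show "connected_nodes (glue T a)" by (rule connected_glue[OF Suc.prems(4) a])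
    qed (use Suc.prems(1-3) a False in auto)
    moreover have "atgt T a \<in> Nodes T" using Suc.prems(3) a by blast
    ultimately show ?thesis
      using Suc.hyps(2) Suc.prems(1,2) a by (simp add: card_Diff_singleton)
  qed
qed

lemma dtree_arrow_is_bridge:
  assumes "is_dtree T" and "b \<in> Arrows T"
  shows "(asrc T b, atgt T b) \<notin> (undir_rel (delete_arrow T b))\<^sup>*"
proof
  assume "(asrc T b, atgt T b) \<in> (undir_rel (delete_arrow T b))\<^sup>*"
  then have "connected_nodes (delete_arrow T b)"
    by (rule connected_delete_arrow[OF is_dtreeD(6)[OF assms(1)]])
  then have "card (Nodes (delete_arrow T b)) \<le> card (Arrows (delete_arrow T b)) + 1"
    using is_dtreeD[OF assms(1)] by (intro connected_card_Nodes_le) auto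
  moreover have "card (Arrows T) > 0"
    using assms is_dtreeD(2) card_gt_0_iff by blast
  ultimately show False
    using is_dtreeD(5)[OF assms(1)] assms(2) by (simp add: card_Diff_singleton)
qed

lemma dtree_no_loop: "is_dtree T \<Longrightarrow> a \<in> Arrows T \<Longrightarrow> asrc T a \<noteq> atgt T a"
  using dtree_arrow_is_bridge by fastforce

lemma dtree_no_parallel:
  assumes "is_dtree T" and "a \<in> Arrows T" and "b \<in> Arrows T" and "a \<noteq> b"
  shows "\<not> (asrc T b \<in> {asrc T a, atgt T a} \<and> atgt T b \<in> {asrc T a, atgt T a})"
proof
  assume ends: "asrc T b \<in> {asrc T a, atgt T a} \<and> atgt T b \<in> {asrc T a, atgt T a}"
  have "(asrc T b, atgt T b) \<in> undir_rel (delete_arrow T b) \<or> asrc T b = atgt T b"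
    using ends assms(2,4) unfolding in_undir_rel_iff by auto
  then show False
    using dtree_arrow_is_bridge[OF assms(1,3)] dtree_no_loop[OF assms(1,3)] by blast
qed

lemma dtree_glue:
  assumes "is_dtree T" and "e \<in> Arrows T"
  shows "is_dtree (glue T e)"
proof -
  note D = is_dtreeD[OF assms(1)]
  have "asrc T e \<in> Nodes (glue T e)" using D(3)[OF assms(2)] dtree_no_loop[OF assms] by simp
  moreover have "card (Arrows T) > 0" using D(2) assms(2) card_gt_0_iff by blast
  then have "card (Arrows (glue T e)) + 1 = card (Nodes (glue T e))"
    using D(1,5) D(4)[OF assms(2)] assms(2) by (simp add: card_Diff_singleton)
  moreover have "\<forall>a\<in>Arrows (glue T e).
      asrc (glue T e) a \<in> Nodes (glue T e) \<and> atgt (glue T e) a \<in> Nodes (glue T e)"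
    using D(3,4) D(3)[OF assms(2)] dtree_no_loop[OF assms] by simp
  ultimately show ?thesis
    using D(1,2) connected_glue[OF D(6) assms(2)]
    unfolding is_dtree_def connected_nodes_def by auto
qed

section \<open>Gluing preserves paths\<close>

definition hedge_comp :: "'v hedge \<Rightarrow> 'v hedge \<Rightarrow> 'v \<Rightarrow> 'v hedge" where
  "hedge_comp A B K = (fst A \<union> (fst B - {K}), (snd A - {K}) \<union> snd B)"

lemma sub_arrows_arrow_ends:
  assumes "is_dtree T" and "e \<in> Arrows T"
  shows "sub_arrows T {asrc T e, atgt T e} = {e}"
  using dtree_no_parallel[OF assms] assms(2) unfolding sub_arrows_def by blast

lemma nlab_glue:
  assumes "is_dtree T" and "e \<in> Arrows T"
  shows "nlab (glue T e) =
    (nlab T)(asrc T e := hedge_comp (nlab T (asrc T e)) (nlab T (atgt T e)) (alab T e))"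
  using dtree_no_loop[OF assms] unfolding glue_def Let_def
  by (auto simp: hedge_comp_def sub_src_def sub_tgt_def sub_arrows_arrow_ends[OF assms])

lemma is_pathD:
  assumes "is_path E T"
  shows "is_dtree T" "\<And>v. v \<in> Nodes T \<Longrightarrow> nlab T v \<in> E"
    "\<And>a. a \<in> Arrows T \<Longrightarrow> snd (nlab T (asrc T a)) \<inter> fst (nlab T (atgt T a)) = {alab T a}"
    "\<And>a b. a \<in> Arrows T \<Longrightarrow> b \<in> Arrows T \<Longrightarrow> a \<noteq> b \<Longrightarrow> asrc T a = asrc T b \<Longrightarrow>
       alab T a \<noteq> alab T b"
    "\<And>a b. a \<in> Arrows T \<Longrightarrow> b \<in> Arrows T \<Longrightarrow> a \<noteq> b \<Longrightarrow> atgt T a = atgt T b \<Longrightarrow>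
       alab T a \<noteq> alab T b"
  using assms unfolding is_path_def by blast+

lemma higraph_meetE:
  assumes "higraph V E" and "x \<in> E" and "y \<in> E" and "snd x \<inter> fst y \<noteq> {}"
  obtains K where "snd x \<inter> fst y = {K}" "fst x \<inter> (fst y - {K}) = {}"
    "(snd x - {K}) \<inter> snd y = {}" "hedge_comp x y K \<in> E"
proof -
  have "snd x \<inter> fst y \<noteq> {} \<longrightarrow> (\<exists>K. snd x \<inter> fst y = {K} \<and> fst x \<inter> (fst y - {K}) = {}
      \<and> (snd x - {K}) \<inter> snd y = {} \<and> hedge_comp x y K \<in> E)"
    using assms(1-3) unfolding higraph_def hedge_comp_def by simp
  then show thesis using that assms(4) by blast
qed

lemma higraph_transitive:
  assumes "higraph V E" and "x \<in> E" and "y \<in> E" and "snd x \<inter> fst y = {K}"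
  shows "fst x \<inter> (fst y - {K}) = {}" "(snd x - {K}) \<inter> snd y = {}" "hedge_comp x y K \<in> E"
proof -
  obtain K' where "snd x \<inter> fst y = {K'}" "fst x \<inter> (fst y - {K'}) = {}"
    "(snd x - {K'}) \<inter> snd y = {}" "hedge_comp x y K' \<in> E"
    by (rule higraph_meetE[OF assms(1-3)]) (simp add: assms(4))
  moreover have "K' = K" using calculation(1) assms(4) by simp
  ultimately show "fst x \<inter> (fst y - {K}) = {}" "(snd x - {K}) \<inter> snd y = {}" "hedge_comp x y K \<in> E"
    by simp_all
qed

lemma higraph_meet_eq:
  assumes "higraph V E" and "x \<in> E" and "y \<in> E" and "K \<in> snd x" and "K \<in> fst y"
  shows "snd x \<inter> fst y = {K}"
proof -
  have "snd x \<inter> fst y \<noteq> {}" using assms(4,5) by blast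
  then obtain K' where "snd x \<inter> fst y = {K'}" by (rule higraph_meetE[OF assms(1-3)])
  moreover have "K \<in> snd x \<inter> fst y" using assms(4,5) by blast
  ultimately show ?thesis by simp
qed

lemma path_arrow_labels:
  assumes "higraph V E" and "is_path E T" and "a \<in> Arrows T"
  shows "alab T a \<in> snd (nlab T (asrc T a))" "alab T a \<in> fst (nlab T (atgt T a))"
    "fst (nlab T (asrc T a)) \<inter> (fst (nlab T (atgt T a)) - {alab T a}) = {}"
    "(snd (nlab T (asrc T a)) - {alab T a}) \<inter> snd (nlab T (atgt T a)) = {}"
    "hedge_comp (nlab T (asrc T a)) (nlab T (atgt T a)) (alab T a) \<in> E"
proof -
  note P = is_pathD[OF assms(2)]
  have "nlab T (asrc T a) \<in> E" "nlab T (atgt T a) \<in> E"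
    using P(2) is_dtreeD(3,4)[OF P(1) assms(3)] by auto
  note T = higraph_transitive[OF assms(1) this P(3)[OF assms(3)]]
  show "alab T a \<in> snd (nlab T (asrc T a))" "alab T a \<in> fst (nlab T (atgt T a))"
    using P(3)[OF assms(3)] by auto
  show "fst (nlab T (asrc T a)) \<inter> (fst (nlab T (atgt T a)) - {alab T a}) = {}"
    "(snd (nlab T (asrc T a)) - {alab T a}) \<inter> snd (nlab T (atgt T a)) = {}"
    "hedge_comp (nlab T (asrc T a)) (nlab T (atgt T a)) (alab T a) \<in> E"
    by (fact T)+
qed

lemma glue_arrow_labels:
  assumes hg: "higraph V E" and P: "is_path E T" and e: "e \<in> Arrows T"
    and a: "a \<in> Arrows (glue T e)"
  shows "snd (nlab (glue T e) (asrc (glue T e) a)) \<inter> fst (nlab (glue T e) (atgt (glue T e) a))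
           = {alab (glue T e) a}"
proof -
  let ?u = "asrc T e" and ?w = "atgt T e" and ?s = "asrc T a" and ?t = "atgt T a"
  let ?c = "hedge_comp (nlab T ?u) (nlab T ?w) (alab T e)"
  note PT = is_pathD[OF P]
  have aT: "a \<in> Arrows T" "a \<noteq> e" using a by auto
  have nlab_eq: "nlab (glue T e) = (nlab T)(?u := ?c)" by (rule nlab_glue[OF PT(1) e])
  have cE: "?c \<in> E" by (rule path_arrow_labels(5)[OF hg P e])
  have stE: "nlab T ?s \<in> E" "nlab T ?t \<in> E" using PT(2) is_dtreeD(3,4)[OF PT(1) aT(1)] by auto
  note lab = path_arrow_labels(1,2)[OF hg P aT(1)]
  consider (leaving) "?s \<in> {?u, ?w}" "?t \<notin> {?u, ?w}" | (entering) "?s \<notin> {?u, ?w}" "?t \<in> {?u, ?w}"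
    | (away) "?s \<notin> {?u, ?w}" "?t \<notin> {?u, ?w}"
    using dtree_no_parallel[OF PT(1) e aT(1) aT(2)[symmetric]] by blast
  then show ?thesis
  proof cases
    case leaving
    have "alab T a \<noteq> alab T e" if "?s = ?u" using PT(4)[OF aT(1) e aT(2)] that by simp
    then have "alab T a \<in> snd ?c" using leaving lab(1) by (auto simp: hedge_comp_def)
    then have "snd ?c \<inter> fst (nlab T ?t) = {alab T a}"
      using higraph_meet_eq[OF hg cE stE(2)] lab(2) by blast
    moreover have "asrc (glue T e) a = ?u" "atgt (glue T e) a = ?t" using leaving by auto
    ultimately show ?thesis using leaving(2) by (simp add: nlab_eq)
  next
    case entering
    have "alab T a \<noteq> alab T e" if "?t = ?w" using PT(5)[OF aT(1) e aT(2)] that by simp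
    then have "alab T a \<in> fst ?c" using entering lab(2) by (auto simp: hedge_comp_def)
    then have "snd (nlab T ?s) \<inter> fst ?c = {alab T a}"
      using higraph_meet_eq[OF hg stE(1) cE] lab(1) by blast
    moreover have "asrc (glue T e) a = ?s" "atgt (glue T e) a = ?u" using entering by auto
    ultimately show ?thesis using entering(1) by (simp add: nlab_eq)
  next
    case away
    then show ?thesis using PT(3)[OF aT(1)] by (simp add: nlab_eq)
  qed
qed

lemma glue_src_labels_distinct:
  assumes hg: "higraph V E" and P: "is_path E T" and e: "e \<in> Arrows T"
    and a: "a \<in> Arrows (glue T e)" and b: "b \<in> Arrows (glue T e)" and ab: "a \<noteq> b"
    and same_src: "asrc (glue T e) a = asrc (glue T e) b"
  shows "alab T a \<noteq> alab T b"
proof (cases "asrc T a = asrc T b")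
  case True
  then show ?thesis using is_pathD(4)[OF P _ _ ab] a b by simp
next
  case False
  have arrows: "a \<in> Arrows T" "a \<noteq> e" "b \<in> Arrows T" "b \<noteq> e" using a b by auto
  have ends_differ: "alab T x \<noteq> alab T y"
    if x: "x \<in> Arrows T" "x \<noteq> e" "asrc T x = asrc T e" and y: "y \<in> Arrows T" "asrc T y = atgt T e"
    for x y
  proof -
    have "alab T x \<in> snd (nlab T (asrc T e)) - {alab T e}"
      using is_pathD(4)[OF P x(1) e x(2)] path_arrow_labels(1)[OF hg P x(1)] x(3) by auto
    moreover have "alab T y \<in> snd (nlab T (atgt T e))"
      using path_arrow_labels(1)[OF hg P y(1)] y(2) by simp
    ultimately show ?thesis using path_arrow_labels(4)[OF hg P e] by (auto simp: disjoint_iff)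
  qed
  from same_src False consider "asrc T a = asrc T e" "asrc T b = atgt T e"
    | "asrc T a = atgt T e" "asrc T b = asrc T e"
    by (auto split: if_splits)
  then show ?thesis
    by cases (use ends_differ[of a b] ends_differ[of b a] arrows in auto)
qed

lemma glue_tgt_labels_distinct:
  assumes hg: "higraph V E" and P: "is_path E T" and e: "e \<in> Arrows T"
    and a: "a \<in> Arrows (glue T e)" and b: "b \<in> Arrows (glue T e)" and ab: "a \<noteq> b"
    and same_tgt: "atgt (glue T e) a = atgt (glue T e) b"
  shows "alab T a \<noteq> alab T b"
proof (cases "atgt T a = atgt T b")
  case True
  then show ?thesis using is_pathD(5)[OF P _ _ ab] a b by simp
next
  case False
  have arrows: "a \<in> Arrows T" "a \<noteq> e" "b \<in> Arrows T" "b \<noteq> e" using a b by auto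
  have ends_differ: "alab T x \<noteq> alab T y"
    if x: "x \<in> Arrows T" "atgt T x = asrc T e" and y: "y \<in> Arrows T" "y \<noteq> e" "atgt T y = atgt T e"
    for x y
  proof -
    have "alab T y \<in> fst (nlab T (atgt T e)) - {alab T e}"
      using is_pathD(5)[OF P y(1) e y(2)] path_arrow_labels(2)[OF hg P y(1)] y(3) by auto
    moreover have "alab T x \<in> fst (nlab T (asrc T e))"
      using path_arrow_labels(2)[OF hg P x(1)] x(2) by simp
    ultimately show ?thesis using path_arrow_labels(3)[OF hg P e] by (auto simp: disjoint_iff)
  qed
  from same_tgt False consider "atgt T a = asrc T e" "atgt T b = atgt T e"
    | "atgt T a = atgt T e" "atgt T b = asrc T e"
    by (auto split: if_splits)
  then show ?thesis
    by cases (use ends_differ[of a b] ends_differ[of b a] arrows in auto)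
qed

lemma path_glue:
  assumes hg: "higraph V E" and P: "is_path E T" and e: "e \<in> Arrows T"
  shows "is_path E (glue T e)"
proof -
  note PT = is_pathD[OF P]
  have "\<forall>v\<in>Nodes (glue T e). nlab (glue T e) v \<in> E"
    using PT(2) path_arrow_labels(5)[OF hg P e] by (simp add: nlab_glue[OF PT(1) e])
  then show ?thesis
    unfolding is_path_def
    using dtree_glue[OF PT(1) e] glue_arrow_labels[OF hg P e]
      glue_src_labels_distinct[OF hg P e] glue_tgt_labels_distinct[OF hg P e]
    by simp
qed

section \<open>Isomorphisms of paths\<close>

lemma path_isoD:
  assumes "path_iso T T' f g"
  shows "bij_betw f (Nodes T) (Nodes T')" "bij_betw g (Arrows T) (Arrows T')"
    "\<And>a. a \<in> Arrows T \<Longrightarrow> asrc T' (g a) = f (asrc T a)"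
    "\<And>a. a \<in> Arrows T \<Longrightarrow> atgt T' (g a) = f (atgt T a)"
    "\<And>a. a \<in> Arrows T \<Longrightarrow> alab T' (g a) = alab T a"
    "\<And>v. v \<in> Nodes T \<Longrightarrow> nlab T' (f v) = nlab T v"
  using assms unfolding path_iso_def by auto

lemma path_iso_id: "path_iso T T id id"
  unfolding path_iso_def by simp

lemma path_iso_comp:
  assumes "path_iso T1 T2 f g" and "path_iso T2 T3 f' g'"
  shows "path_iso T1 T3 (f' \<circ> f) (g' \<circ> g)"
proof -
  note I = path_isoD[OF assms(1)] and I' = path_isoD[OF assms(2)]
  show ?thesis
    unfolding path_iso_def
    using bij_betw_trans[OF I(1) I'(1)] bij_betw_trans[OF I(2) I'(2)]
      I(3-6) I'(3-6) bij_betw_apply[OF I(1)] bij_betw_apply[OF I(2)]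
    by simp
qed

lemma path_iso_idI:
  assumes "Nodes T1 = Nodes T2" and "Arrows T1 = Arrows T2"
    and "\<And>a. a \<in> Arrows T1 \<Longrightarrow>
      asrc T2 a = asrc T1 a \<and> atgt T2 a = atgt T1 a \<and> alab T2 a = alab T1 a"
    and "\<And>v. v \<in> Nodes T1 \<Longrightarrow> nlab T2 v = nlab T1 v"
  shows "path_iso T1 T2 id id"
  using assms unfolding path_iso_def by simp

lemma path_iso_id_sym: "path_iso T1 T2 id id \<Longrightarrow> path_iso T2 T1 id id"
  unfolding path_iso_def by (simp add: bij_betw_def)

definition iso_id_on_breaks :: "('v,'n,'a) hpath \<Rightarrow> ('v,'m,'a) hpath \<Rightarrow> bool" where
  "iso_id_on_breaks T T' \<longleftrightarrow> (\<exists>f. path_iso T T' f id)"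

lemma iso_id_on_breaks_refl: "iso_id_on_breaks T T"
  unfolding iso_id_on_breaks_def using path_iso_id by blast

lemma iso_id_on_breaks_trans:
  "iso_id_on_breaks T1 T2 \<Longrightarrow> iso_id_on_breaks T2 T3 \<Longrightarrow> iso_id_on_breaks T1 T3"
  unfolding iso_id_on_breaks_def using path_iso_comp by fastforce

lemma path_iso_glue:
  assumes I: "path_iso T T' f g" and D: "is_dtree T" and D': "is_dtree T'" and e: "e \<in> Arrows T"
  shows "path_iso (glue T e) (glue T' (g e)) f g"
proof -
  note I = path_isoD[OF I]
  have ge: "g e \<in> Arrows T'" using bij_betw_apply[OF I(2) e] .
  have ends: "asrc T e \<in> Nodes T" "atgt T e \<in> Nodes T" using is_dtreeD(3,4)[OF D e] by auto
  have f_eq_iff: "f x = f y \<longleftrightarrow> x = y" if "x \<in> Nodes T" "y \<in> Nodes T" for x y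
    using bij_betw_imp_inj_on[OF I(1)] that unfolding inj_on_def by blast
  show ?thesis
    unfolding path_iso_def
  proof (intro conjI ballI)
    show "bij_betw f (Nodes (glue T e)) (Nodes (glue T' (g e)))"
      using bij_betw_DiffI[OF I(1), of "{atgt T e}" "{f (atgt T e)}"] ends I(4)[OF e]
        bij_betw_apply[OF I(1)] by simp
    show "bij_betw g (Arrows (glue T e)) (Arrows (glue T' (g e)))"
      using bij_betw_DiffI[OF I(2), of "{e}" "{g e}"] e ge by simp
  next
    fix z assume "z \<in> Arrows (glue T e)"
    then have z: "z \<in> Arrows T" "asrc T z \<in> Nodes T" "atgt T z \<in> Nodes T"
      using is_dtreeD(3,4)[OF D] by auto
    show "asrc (glue T' (g e)) (g z) = f (asrc (glue T e) z)"
      and "atgt (glue T' (g e)) (g z) = f (atgt (glue T e) z)"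
      and "alab (glue T' (g e)) (g z) = alab (glue T e) z"
      using I(3-5)[OF z(1)] I(3,4)[OF e] f_eq_iff[OF z(2) ends(2)] f_eq_iff[OF z(3) ends(2)]
      by simp_all
  next
    fix v assume "v \<in> Nodes (glue T e)"
    then have "v \<in> Nodes T" by simp
    then show "nlab (glue T' (g e)) (f v) = nlab (glue T e) v"
      unfolding nlab_glue[OF D e] nlab_glue[OF D' ge]
      using f_eq_iff[OF _ ends(1)] I(3-5)[OF e] I(6) ends by simp
  qed
qed

lemma Arrows_glue_all: "Arrows (glue_all T es) = Arrows T - set es"
  by (induction es arbitrary: T) auto

lemma path_glue_all:
  assumes "higraph V E" and "is_path E T" and "set es \<subseteq> Arrows T" and "distinct es"
  shows "is_path E (glue_all T es)"
  using assms(2-)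
proof (induction es arbitrary: T)
  case (Cons e es)
  then show ?case by (simp add: Cons.IH path_glue[OF assms(1)] subset_Diff_insert)
qed simp

lemma path_iso_glue_all:
  assumes hg: "higraph V E" and "is_path E T" and "is_path E T'" and "path_iso T T' f g"
    and "set es \<subseteq> Arrows T" and "distinct es"
  shows "path_iso (glue_all T es) (glue_all T' (map g es)) f g"
  using assms(2-)
proof (induction es arbitrary: T T')
  case (Cons e es)
  have e: "e \<in> Arrows T" using Cons.prems(4) by simp
  have ge: "g e \<in> Arrows T'" using bij_betw_apply[OF path_isoD(2)[OF Cons.prems(3)] e] .
  have "path_iso (glue T e) (glue T' (g e)) f g"
    by (rule path_iso_glue[OF Cons.prems(3) is_pathD(1)[OF Cons.prems(1)]
          is_pathD(1)[OF Cons.prems(2)] e])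
  then show ?case
    using Cons.IH[OF path_glue[OF hg Cons.prems(1) e] path_glue[OF hg Cons.prems(2) ge]]
      Cons.prems(4,5) by (simp add: subset_Diff_insert)
qed simp

lemma iso_id_on_breaks_glue_all:
  assumes "higraph V E" and "is_path E T" and "is_path E T'" and "iso_id_on_breaks T T'"
    and "set es \<subseteq> Arrows T" and "distinct es"
  shows "iso_id_on_breaks (glue_all T es) (glue_all T' es)"
  using assms path_iso_glue_all[OF assms(1-3), of _ id es] unfolding iso_id_on_breaks_def by auto

section \<open>Changing the gluing order\<close>

lemma hedge_comp_assoc:
  assumes "K \<notin> fst C - {L}" and "L \<notin> snd A - {K}"
  shows "hedge_comp (hedge_comp A B K) C L = hedge_comp A (hedge_comp B C L) K"
proof -
  have "fst A \<union> (fst B - {K}) \<union> (fst C - {L}) = fst A \<union> (fst B \<union> (fst C - {L}) - {K})"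
    using assms(1) by blast
  moreover have "(snd A - {K}) \<union> snd B - {L} \<union> snd C = (snd A - {K}) \<union> ((snd B - {L}) \<union> snd C)"
    using assms(2) by blast
  ultimately show ?thesis unfolding hedge_comp_def by simp
qed

lemma hedge_comp_right_commute:
  "L \<notin> snd B \<Longrightarrow> K \<notin> snd C \<Longrightarrow>
     hedge_comp (hedge_comp A B K) C L = hedge_comp (hedge_comp A C L) B K"
  unfolding hedge_comp_def by auto

lemma hedge_comp_left_commute:
  "K \<notin> fst C \<Longrightarrow> L \<notin> fst A \<Longrightarrow>
     hedge_comp C (hedge_comp A B K) L = hedge_comp A (hedge_comp C B L) K"
  unfolding hedge_comp_def by auto

lemma glue_glue_chain:
  assumes hg: "higraph V E" and P: "is_path E T" and a: "a \<in> Arrows T" and b: "b \<in> Arrows T"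
    and ab: "a \<noteq> b" and chain: "asrc T b = atgt T a"
  shows "path_iso (glue (glue T a) b) (glue (glue T b) a) id id"
proof (rule path_iso_idI)
  have D: "is_dtree T" by (rule is_pathD(1)[OF P])
  have ends: "atgt T b \<noteq> asrc T a" "atgt T b \<noteq> atgt T a" "asrc T a \<noteq> atgt T a"
    using dtree_no_parallel[OF D a b ab] dtree_no_loop[OF D b] dtree_no_loop[OF D a] chain by auto
  then show "Nodes (glue (glue T a) b) = Nodes (glue (glue T b) a)"
    and "\<And>z. asrc (glue (glue T b) a) z = asrc (glue (glue T a) b) z
      \<and> atgt (glue (glue T b) a) z = atgt (glue (glue T a) b) z
      \<and> alab (glue (glue T b) a) z = alab (glue (glue T a) b) z"
    using chain by auto
  show "Arrows (glue (glue T a) b) = Arrows (glue (glue T b) a)" by auto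
  have "hedge_comp (hedge_comp (nlab T (asrc T a)) (nlab T (atgt T a)) (alab T a))
      (nlab T (atgt T b)) (alab T b)
    = hedge_comp (nlab T (asrc T a))
      (hedge_comp (nlab T (atgt T a)) (nlab T (atgt T b)) (alab T b)) (alab T a)"
    using path_arrow_labels[OF hg P a] path_arrow_labels[OF hg P b] chain
    by (intro hedge_comp_assoc) auto
  then show "nlab (glue (glue T b) a) v = nlab (glue (glue T a) b) v"
    if "v \<in> Nodes (glue (glue T a) b)" for v
    using that D a b ab chain ends by (simp add: nlab_glue dtree_glue)
qed

lemma glue_glue_common_src:
  assumes hg: "higraph V E" and P: "is_path E T" and a: "a \<in> Arrows T" and b: "b \<in> Arrows T"
    and ab: "a \<noteq> b" and common: "asrc T b = asrc T a"
  shows "path_iso (glue (glue T a) b) (glue (glue T b) a) id id"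
proof (rule path_iso_idI)
  have D: "is_dtree T" by (rule is_pathD(1)[OF P])
  have ends: "atgt T b \<noteq> asrc T a" "atgt T b \<noteq> atgt T a" "asrc T a \<noteq> atgt T a"
    using dtree_no_parallel[OF D a b ab] dtree_no_loop[OF D b] dtree_no_loop[OF D a] common by auto
  then show "Nodes (glue (glue T a) b) = Nodes (glue (glue T b) a)"
    and "\<And>z. asrc (glue (glue T b) a) z = asrc (glue (glue T a) b) z
      \<and> atgt (glue (glue T b) a) z = atgt (glue (glue T a) b) z
      \<and> alab (glue (glue T b) a) z = alab (glue (glue T a) b) z"
    using common by auto
  show "Arrows (glue (glue T a) b) = Arrows (glue (glue T b) a)" by auto
  have "alab T a \<noteq> alab T b" using is_pathD(4)[OF P a b ab] common by simp
  then have "hedge_comp (hedge_comp (nlab T (asrc T a)) (nlab T (atgt T a)) (alab T a))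
      (nlab T (atgt T b)) (alab T b)
    = hedge_comp (hedge_comp (nlab T (asrc T a)) (nlab T (atgt T b)) (alab T b))
      (nlab T (atgt T a)) (alab T a)"
    using path_arrow_labels[OF hg P a] path_arrow_labels[OF hg P b] common
    by (intro hedge_comp_right_commute) auto
  then show "nlab (glue (glue T b) a) v = nlab (glue (glue T a) b) v"
    if "v \<in> Nodes (glue (glue T a) b)" for v
    using that D a b ab common ends by (simp add: nlab_glue dtree_glue)
qed

text \<open>The two orders keep different representatives of the merged node, the sources of the
  two breaks, hence the transposition.\<close>
lemma glue_glue_common_tgt:
  assumes hg: "higraph V E" and P: "is_path E T" and a: "a \<in> Arrows T" and b: "b \<in> Arrows T"
    and ab: "a \<noteq> b" and common: "atgt T b = atgt T a"
  shows "path_iso (glue (glue T a) b) (glue (glue T b) a)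
    (Transposition.transpose (asrc T a) (asrc T b)) id"
proof -
  let ?u = "asrc T a" and ?x = "asrc T b" and ?w = "atgt T a"
  let ?\<tau> = "Transposition.transpose ?u ?x"
  have D: "is_dtree T" by (rule is_pathD(1)[OF P])
  have ends: "?x \<noteq> ?u" "?x \<noteq> ?w" "?u \<noteq> ?w"
    using dtree_no_parallel[OF D a b ab] dtree_no_loop[OF D b] dtree_no_loop[OF D a] common by auto
  have nodes: "Nodes (glue (glue T a) b) = Nodes T - {?w, ?u}"
    "Nodes (glue (glue T b) a) = Nodes T - {?w, ?x}"
    using common ends by auto
  have "?\<tau> ` (Nodes T - {?w, ?u}) = Nodes T - {?w, ?x}"
    using ends is_dtreeD(3)[OF D a] is_dtreeD(3)[OF D b]
    by (auto simp: in_transpose_image_iff transpose_def)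
  then have "bij_betw ?\<tau> (Nodes (glue (glue T a) b)) (Nodes (glue (glue T b) a))"
    unfolding nodes by (simp add: bij_betw_def)
  moreover have "alab T a \<noteq> alab T b" using is_pathD(5)[OF P a b ab] common by simp
  then have "hedge_comp (nlab T ?x) (hedge_comp (nlab T ?u) (nlab T ?w) (alab T a)) (alab T b)
      = hedge_comp (nlab T ?u) (hedge_comp (nlab T ?x) (nlab T ?w) (alab T b)) (alab T a)"
    using path_arrow_labels[OF hg P a] path_arrow_labels[OF hg P b] common
    by (intro hedge_comp_left_commute) auto
  then have "nlab (glue (glue T b) a) (?\<tau> v) = nlab (glue (glue T a) b) v"
    if "v \<in> Nodes (glue (glue T a) b)" for v
    using that D a b ab common ends by (auto simp: nlab_glue dtree_glue transpose_def)
  ultimately show ?thesis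
    unfolding path_iso_def using common ends by (auto simp: transpose_def bij_betw_def)
qed

lemma glue_glue_apart:
  assumes D: "is_dtree T" and a: "a \<in> Arrows T" and b: "b \<in> Arrows T" and ab: "a \<noteq> b"
    and apart: "asrc T b \<noteq> asrc T a" "asrc T b \<noteq> atgt T a" "atgt T b \<noteq> asrc T a"
      "atgt T b \<noteq> atgt T a"
  shows "path_iso (glue (glue T a) b) (glue (glue T b) a) id id"
proof (rule path_iso_idI)
  show "Nodes (glue (glue T a) b) = Nodes (glue (glue T b) a)"
    and "Arrows (glue (glue T a) b) = Arrows (glue (glue T b) a)"
    and "\<And>z. asrc (glue (glue T b) a) z = asrc (glue (glue T a) b) z
      \<and> atgt (glue (glue T b) a) z = atgt (glue (glue T a) b) z
      \<and> alab (glue (glue T b) a) z = alab (glue (glue T a) b) z"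
    using apart by auto
  show "nlab (glue (glue T b) a) v = nlab (glue (glue T a) b) v" for v
    using apart D a b ab by (auto simp: nlab_glue dtree_glue)
qed

lemma glue_glue_commute:
  assumes hg: "higraph V E" and P: "is_path E T" and a: "a \<in> Arrows T" and b: "b \<in> Arrows T"
    and ab: "a \<noteq> b"
  shows "iso_id_on_breaks (glue (glue T a) b) (glue (glue T b) a)"
proof -
  consider "asrc T b = atgt T a" | "asrc T a = atgt T b" | "asrc T b = asrc T a"
    | "atgt T b = atgt T a"
    | "asrc T b \<noteq> asrc T a" "asrc T b \<noteq> atgt T a"
      "atgt T b \<noteq> asrc T a" "atgt T b \<noteq> atgt T a"
    by metis
  then have "\<exists>f. path_iso (glue (glue T a) b) (glue (glue T b) a) f id"
  proof cases
    case 2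
    then show ?thesis
      using path_iso_id_sym[OF glue_glue_chain[OF hg P b a ab[symmetric]]] by blast
  qed (use glue_glue_chain[OF hg P a b ab] glue_glue_common_src[OF hg P a b ab]
      glue_glue_common_tgt[OF hg P a b ab] glue_glue_apart[OF is_pathD(1)[OF P] a b ab] in blast)+
  then show ?thesis unfolding iso_id_on_breaks_def .
qed

lemma glue_all_move_front:
  assumes hg: "higraph V E" and "is_path E T"
    and "distinct (ys @ a # zs)" and "set (ys @ a # zs) \<subseteq> Arrows T"
  shows "iso_id_on_breaks (glue_all T (a # ys @ zs)) (glue_all T (ys @ a # zs))"
  using assms(2-)
proof (induction ys arbitrary: T)
  case Nil
  then show ?case by (simp add: iso_id_on_breaks_refl)
next
  case (Cons c ys)
  have a: "a \<in> Arrows T" and c: "c \<in> Arrows T" and ac: "a \<noteq> c" using Cons.prems by auto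
  have "is_path E (glue (glue T a) c)" "is_path E (glue (glue T c) a)"
    using Cons.prems(1) a c ac by (auto intro!: path_glue[OF hg])
  then have "iso_id_on_breaks (glue_all T (a # (c # ys) @ zs)) (glue_all (glue T c) (a # ys @ zs))"
    using iso_id_on_breaks_glue_all[OF hg _ _ glue_glue_commute[OF hg Cons.prems(1) a c ac],
        of "ys @ zs"] Cons.prems(2,3) by auto
  moreover have
    "iso_id_on_breaks (glue_all (glue T c) (a # ys @ zs)) (glue_all (glue T c) (ys @ a # zs))"
    using Cons.IH[OF path_glue[OF hg Cons.prems(1) c]] Cons.prems(2,3) by auto
  ultimately show ?case by (auto intro: iso_id_on_breaks_trans)
qed

lemma glue_all_perm_iso_id_on_breaks:
  assumes hg: "higraph V E" and "is_path E T"
    and "distinct xs" and "distinct ys" and "set xs = set ys" and "set xs \<subseteq> Arrows T"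
  shows "iso_id_on_breaks (glue_all T xs) (glue_all T ys)"
  using assms(2-)
proof (induction xs arbitrary: T ys)
  case Nil
  then show ?case by (simp add: iso_id_on_breaks_refl)
next
  case (Cons a xs)
  then have "a \<in> set ys" by auto
  then obtain ys1 ys2 where ys: "ys = ys1 @ a # ys2" by (meson split_list)
  have a: "a \<in> Arrows T" using Cons.prems by auto
  have "set xs = set (ys1 @ ys2)" "distinct (ys1 @ ys2)"
    and "set xs \<subseteq> Arrows (glue T a)" "distinct xs"
    using Cons.prems(2-5) ys by (auto simp: insert_ident)
  then have "iso_id_on_breaks (glue_all (glue T a) xs) (glue_all (glue T a) (ys1 @ ys2))"
    using Cons.IH[OF path_glue[OF hg Cons.prems(1) a]] by blast
  moreover have "iso_id_on_breaks (glue_all T (a # ys1 @ ys2)) (glue_all T ys)"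
    using glue_all_move_front[OF hg Cons.prems(1)] Cons.prems ys by blast
  ultimately show ?case by (auto intro: iso_id_on_breaks_trans)
qed

section \<open>Rigidity of paths\<close>

lemma automorphism_fix_arrow:
  assumes P: "is_path E T" and I: "path_iso T T f g" and c: "c \<in> Arrows T"
    and fixed: "f (asrc T c) = asrc T c \<or> f (atgt T c) = atgt T c"
  shows "g c = c" "f (asrc T c) = asrc T c" "f (atgt T c) = atgt T c"
proof -
  note I = path_isoD[OF I]
  have gc: "g c \<in> Arrows T" using bij_betw_apply[OF I(2) c] .
  show "g c = c"
  proof (rule ccontr)
    assume "g c \<noteq> c"
    then show False
      using fixed is_pathD(4,5)[OF P gc c] I(3-5)[OF c] by auto
  qed
  then show "f (asrc T c) = asrc T c" "f (atgt T c) = atgt T c"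
    using I(3,4)[OF c] by simp_all
qed

lemma automorphism_fixing_node:
  assumes P: "is_path E T" and I: "path_iso T T f g" and v0: "v0 \<in> Nodes T" "f v0 = v0"
  shows "\<forall>a\<in>Arrows T. g a = a"
proof -
  have "f v = v" if "v \<in> Nodes T" for v
  proof -
    have "(v0, v) \<in> (undir_rel T)\<^sup>*"
      using is_dtreeD(6)[OF is_pathD(1)[OF P]] v0(1) that unfolding connected_nodes_def by blast
    then show ?thesis
    proof induction
      case (step y z)
      then obtain c where "c \<in> Arrows T" "y = asrc T c \<and> z = atgt T c \<or> y = atgt T c \<and> z = asrc T c"
        unfolding in_undir_rel_iff by blast
      then show ?case using automorphism_fix_arrow(2,3)[OF P I] step.IH by metis
    qed (rule v0(2))
  qed
  then show ?thesis
    using automorphism_fix_arrow(1)[OF P I] is_dtreeD(3)[OF is_pathD(1)[OF P]] by blast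
qed

text \<open>With a single label no two breaks share a target, so exactly one node is not a target.\<close>
lemma automorphism_fixes_root:
  assumes P: "is_path E T" and I: "path_iso T T f g" and same: "\<forall>a\<in>Arrows T. alab T a = K"
  shows "\<exists>v0\<in>Nodes T. f v0 = v0"
proof -
  note I = path_isoD[OF I] and D = is_dtreeD[OF is_pathD(1)[OF P]]
  have "inj_on (atgt T) (Arrows T)"
    using is_pathD(5)[OF P] same unfolding inj_on_def by metis
  moreover have tgts: "atgt T ` Arrows T \<subseteq> Nodes T" using D(4) by auto
  ultimately have "card (Nodes T - atgt T ` Arrows T) = 1"
    using card_Diff_subset[OF finite_subset[OF tgts D(1)] tgts] card_image D(5) by fastforce
  then obtain v0 where v0: "Nodes T - atgt T ` Arrows T = {v0}" by (rule card_1_singletonE)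
  have "f v0 \<notin> atgt T ` Arrows T"
  proof
    assume "f v0 \<in> atgt T ` Arrows T"
    then obtain b where "b \<in> Arrows T" "f v0 = f (atgt T b)"
      using I(4) bij_betw_imp_surj_on[OF I(2)] by (metis imageE)
    then have "v0 = atgt T b"
      using bij_betw_imp_inj_on[OF I(1)] D(4) v0 unfolding inj_on_def by blast
    with \<open>b \<in> Arrows T\<close> show False using v0 by blast
  qed
  then have "f v0 = v0" using v0 bij_betw_apply[OF I(1)] by blast
  then show ?thesis using v0 by blast
qed

lemma automorphism_glue_all_invariant:
  assumes hg: "higraph V E" and P: "is_path E T" and I: "path_iso T T f g"
    and es: "set es \<subseteq> Arrows T" "distinct es" and invariant: "g ` set es = set es"
  shows "\<exists>f'. path_iso (glue_all T es) (glue_all T es) f' g"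
proof -
  have "inj_on g (set es)"
    using inj_on_subset[OF bij_betw_imp_inj_on[OF path_isoD(2)[OF I]] es(1)] .
  then have "distinct (map g es)" "set (map g es) = set es" "set (map g es) \<subseteq> Arrows T"
    using es invariant by (simp_all add: distinct_map)
  then obtain f' where "path_iso (glue_all T (map g es)) (glue_all T es) f' id"
    using glue_all_perm_iso_id_on_breaks[OF hg P _ es(2)] unfolding iso_id_on_breaks_def by blast
  with path_iso_glue_all[OF hg P P I es]
  have "path_iso (glue_all T es) (glue_all T es) (f' \<circ> f) (id \<circ> g)"
    by (rule path_iso_comp)
  then show ?thesis unfolding id_comp by blast
qed

theorem path_automorphism_trivial:
  assumes hg: "higraph V E" and P: "is_path E T" and I: "path_iso T T f g"
  shows "\<forall>a\<in>Arrows T. g a = a"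
  using P I
proof (induction "card (Arrows T)" arbitrary: T f g rule: less_induct)
  case less
  note I = path_isoD[OF less.prems(2)] and D = is_dtreeD[OF is_pathD(1)[OF less.prems(1)]]
  show ?case
  proof (cases "Arrows T = {}")
    case False
    then obtain e where e: "e \<in> Arrows T" by blast
    define S where "S = {a \<in> Arrows T. alab T a = alab T e}"
    show ?thesis
    proof (cases "S = Arrows T")
      case True
      then show ?thesis
        using automorphism_fixes_root[OF less.prems] automorphism_fixing_node[OF less.prems]
        unfolding S_def by blast
    next
      case False
      then obtain c where c: "c \<in> Arrows T" "c \<notin> S" unfolding S_def by blast
      have S_sub: "S \<subseteq> Arrows T" unfolding S_def by blast
      then obtain es where es: "set es = S" "distinct es"
        using finite_distinct_list finite_subset D(2) by metis
      have "g ` S = S"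
        using I(5) bij_betw_apply[OF I(2)] finite_subset[OF S_sub D(2)]
          inj_on_subset[OF bij_betw_imp_inj_on[OF I(2)] S_sub]
        by (intro endo_inj_surj) (auto simp: S_def)
      then have "g ` set es = set es" "set es \<subseteq> Arrows T" using es(1) S_sub by simp_all
      then obtain f' where "path_iso (glue_all T es) (glue_all T es) f' g"
        using automorphism_glue_all_invariant[OF hg less.prems _ es(2)] by blast
      moreover have "is_path E (glue_all T es)"
        using path_glue_all[OF hg less.prems(1)] es S_sub by blast
      moreover have "card (Arrows (glue_all T es)) < card (Arrows T)"
        using e D(2) unfolding Arrows_glue_all es(1) S_def by (auto intro!: psubset_card_mono)
      ultimately have "\<forall>a\<in>Arrows (glue_all T es). g a = a"
        using less.hyps by blast
      then have "g c = c"
        using c unfolding Arrows_glue_all es(1) by blast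
      then show ?thesis
        using automorphism_fixing_node[OF less.prems] I(3)[OF c(1)] D(3)[OF c(1)] by metis
    qed
  qed simp
qed

section \<open>Gluing sequences\<close>

lemma tuple_to_gseq_eq_self: "tuple_to_gseq T es = es"
  by (induction es arbitrary: T) (simp_all add: glue_pi_def[abs_def])

lemma is_gseq_iff: "is_gseq T es \<longleftrightarrow> set es \<subseteq> Arrows T \<and> distinct es"
  by (induction es arbitrary: T) auto

lemma gseq_iso_refl: "gseq_iso T es T es"
  by (induction es arbitrary: T) (auto simp: isomorphic_def intro!: exI[where x = id] path_iso_id)

lemma gseq_iso_imp_eq:
  assumes hg: "higraph V E"
  shows "is_path E T \<Longrightarrow> is_gseq T es \<Longrightarrow> gseq_iso T es T es' \<Longrightarrow> es' = es"
proof (induction es arbitrary: T es')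
  case Nil
  then show ?case by (cases es') auto
next
  case (Cons e es)
  then obtain e' es'' f g where es': "es' = e' # es''" and "path_iso T T f g" "g e = e'"
    and rest: "gseq_iso (glue T e) es (glue T e') es''"
    by (cases es') auto
  moreover have e: "e \<in> Arrows T" using Cons.prems(2) by simp
  ultimately have "e' = e" using path_automorphism_trivial[OF hg Cons.prems(1)] by blast
  moreover have "es'' = es"
    using Cons.IH[OF path_glue[OF hg Cons.prems(1) e]] Cons.prems(2) rest \<open>e' = e\<close> by simp
  ultimately show ?case using es' by simp
qed

lemma inj_on_gseq_class:
  assumes "higraph V E" and "is_path E T"
  shows "inj_on (\<lambda>es. gseq_rel T `` {es}) {es. is_gseq T es}"
proof (rule inj_onI)
  fix xs ys assume "xs \<in> {es. is_gseq T es}" "ys \<in> {es. is_gseq T es}"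
    and "gseq_rel T `` {xs} = gseq_rel T `` {ys}"
  moreover have "(xs, xs) \<in> gseq_rel T" by (simp add: gseq_rel_def gseq_iso_refl)
  ultimately have "gseq_iso T ys T xs" "is_gseq T ys" by (auto simp: gseq_rel_def)
  then show "xs = ys" using gseq_iso_imp_eq[OF assms] by blast
qed

lemma isomorphic_glue_all_permute:
  assumes "higraph V E" and "is_path E T" and "es \<in> break_tuples T k" and "p permutes {..<k}"
  shows "isomorphic (glue_all T es) (glue_all T (map (\<lambda>i. es ! p i) [0..<k]))"
proof -
  have es: "set es \<subseteq> Arrows T" "distinct es" "length es = k"
    using assms(3) unfolding break_tuples_def by auto
  then have perm: "map (\<lambda>i. es ! p i) [0..<k] = permute_list p es"
    unfolding permute_list_def by simp
  have "mset (permute_list p es) = mset es"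
    using mset_permute_list assms(4) es(3) by blast
  then have "distinct (permute_list p es)" "set es = set (permute_list p es)"
    using es(2) by (metis mset_eq_imp_distinct_iff, metis set_mset_mset)
  then have "iso_id_on_breaks (glue_all T es) (glue_all T (permute_list p es))"
    using glue_all_perm_iso_id_on_breaks[OF assms(1,2)] es by blast
  then show ?thesis unfolding perm iso_id_on_breaks_def isomorphic_def by blast
qed

theorem proposition4p17:
  fixes V :: "'v set" and E :: "'v hedge set" and \<rho>1 :: "('v,'n,'a) hpath" and k :: nat
  assumes "higraph V E" and "is_path E \<rho>1" and "k \<ge> 1"
  shows "bij_betw (\<lambda>es. gseq_rel \<rho>1 `` {tuple_to_gseq \<rho>1 es})
           (break_tuples \<rho>1 k) (gluing_sequences \<rho>1 k)
       \<and> (\<forall>es\<in>break_tuples \<rho>1 k. \<forall>p. p permutes {..<k} \<longrightarrow>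
            isomorphic (glue_all \<rho>1 (tuple_to_gseq \<rho>1 es))
                       (glue_all \<rho>1 (tuple_to_gseq \<rho>1 (map (\<lambda>i. es ! p i) [0..<k]))))"
proof
  have tuples: "break_tuples \<rho>1 k = {es. is_gseq \<rho>1 es \<and> length es = k}"
    unfolding break_tuples_def is_gseq_iff by auto
  have "inj_on (\<lambda>es. gseq_rel \<rho>1 `` {es}) (break_tuples \<rho>1 k)"
    using inj_on_gseq_class[OF assms(1,2)] unfolding tuples by (rule inj_on_subset) blast
  then show "bij_betw (\<lambda>es. gseq_rel \<rho>1 `` {tuple_to_gseq \<rho>1 es})
      (break_tuples \<rho>1 k) (gluing_sequences \<rho>1 k)"
    unfolding bij_betw_def tuple_to_gseq_eq_self gluing_sequences_def tuples[symmetric]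
    by (auto simp: quotient_def)
next
  show "\<forall>es\<in>break_tuples \<rho>1 k. \<forall>p. p permutes {..<k} \<longrightarrow>
      isomorphic (glue_all \<rho>1 (tuple_to_gseq \<rho>1 es))
        (glue_all \<rho>1 (tuple_to_gseq \<rho>1 (map (\<lambda>i. es ! p i) [0..<k])))"
    unfolding tuple_to_gseq_eq_self using isomorphic_glue_all_permute[OF assms(1,2)] by blast
qed

end
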